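(* Let $\mu$ be a distribution over $\{-1,+1\}^n$, $\alpha\in(0,1)$, and $D\subseteq\mathbb R^n_{>0}$. Define $$D^{\mathrm{hom}}=\left\{(z_1,\dots,z_n,z_{\bar1},\dots,z_{\bar n})\in\mathbb R^{2n}_{>0}:\left(\tfrac{z_1}{z_{\bar1}},\dots,\tfrac{z_n}{z_{\bar n}}\right)\in D\right\}.$$ Then $\mu$ is $(1/\alpha)$-product dominated on $D$ if and only if $\mu^{\mathrm{hom}}$ is $(1/\alpha)$-entropically independent on $D^{\mathrm{hom}}$. In particular, $\mu$ is $(1/\alpha)$-product dominated if and only if $\mu^{\mathrm{hom}}$ is $(1/\alpha)$-entropically independent.
   Context: $\mu_i$ is the marginal of $\mu$ on coordinate $i$. The generating function of $\mu$ is $g_\mu(z)=\sum_\sigma\mu(\sigma)\prod_{i:\sigma_i=+1}z_i$. $\mu$ is $(1/\alpha)$-product dominated on $D$ if for all $z\in D$, $g_\mu(z_1^\alpha,\dots,z_n^\alpha)^{1/\alpha}\le\prod_{i=1}^n(\mu_i(+1)z_i+\mu_i(-1))$; "product dominated" without qualification means on $D=\mathbb R^n_{>0}$. Homogenization: with $[\bar n]=\{\bar1,\dots,\bar n\}$, $\mu^{\mathrm{hom}}$ is the distribution over $\binom{[n]\cup[\bar n]}{n}$ with $\mu^{\mathrm{hom}}(S_\sigma)=\mu(\sigma)$, where $S_\sigma=\{i:\sigma_i=+1\}\cup\{\bar i:\sigma_i=-1\}$, and $\mu^{\mathrm{hom}}(T)=0$ for other $T$. For a distribution $\pi$ over $\binom{U}{k}$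 with generating function $g_\pi(z)=\sum_S\pi(S)\prod_{i\in S}z_i$, $\pi$ is $(1/\alpha)$-entropically independent on $D'\subseteq\mathbb R^U_{>0}$ if for all $z\in D'$, $g_\pi(z^\alpha)^{1/(k\alpha)}\le\frac1k\sum_{i\in U}\Pr_{S\sim\pi}[i\in S]z_i$ (with $z^\alpha$ coordinatewise); without qualification, on $D'=\mathbb R^U_{>0}$. *)

theory Defs
  imports Complex_Main "HOL-Library.FuncSet"
begin

definition cube :: "nat \<Rightarrow> (nat \<Rightarrow> int) set" where
  "cube n = PiE {..<n} (\<lambda>_. {-1, 1})"

definition is_distr :: "nat \<Rightarrow> ((nat \<Rightarrow> int) \<Rightarrow> real) \<Rightarrow> bool" where
  "is_distr n mu \<longleftrightarrow> (\<forall>\<sigma>\<in>cube n. mu \<sigma> \<ge> 0) \<and> (\<Sum>\<sigma>\<in>cube n. mu \<sigma>) = 1"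

definition marg :: "nat \<Rightarrow> ((nat \<Rightarrow> int) \<Rightarrow> real) \<Rightarrow> nat \<Rightarrow> int \<Rightarrow> real" where
  "marg n mu i s = (\<Sum>\<sigma>\<in>cube n. if \<sigma> i = s then mu \<sigma> else 0)"

definition gen_cube :: "nat \<Rightarrow> ((nat \<Rightarrow> int) \<Rightarrow> real) \<Rightarrow> (nat \<Rightarrow> real) \<Rightarrow> real" where
  "gen_cube n mu z = (\<Sum>\<sigma>\<in>cube n. mu \<sigma> * (\<Prod>i\<in>{i. i < n \<and> \<sigma> i = 1}. z i))"

definition product_dominated_on ::
  "nat \<Rightarrow> ((nat \<Rightarrow> int) \<Rightarrow> real) \<Rightarrow> real \<Rightarrow> (nat \<Rightarrow> real) set \<Rightarrow> bool" where
  "product_dominated_on n mu \<alpha> D \<longleftrightarrow>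
     (\<forall>z\<in>D. (gen_cube n mu (\<lambda>i. z i powr \<alpha>)) powr (1 / \<alpha>)
              \<le> (\<Prod>i<n. marg n mu i 1 * z i + marg n mu i (-1)))"

definition pos_orthant :: "nat \<Rightarrow> (nat \<Rightarrow> real) set" where
  "pos_orthant n = {z. \<forall>i<n. z i > 0}"

text \<open>Ground set \<open>[n] \<union> [n\<bar>]\<close>: \<open>Inl i\<close> stands for \<open>i\<close>, \<open>Inr i\<close> for \<open>\<bar>i\<close>.\<close>
definition ground :: "nat \<Rightarrow> (nat + nat) set" where
  "ground n = Inl ` {..<n} \<union> Inr ` {..<n}"

definition S_of :: "nat \<Rightarrow> (nat \<Rightarrow> int) \<Rightarrow> (nat + nat) set" where
  "S_of n \<sigma> = Inl ` {i. i < n \<and> \<sigma> i = 1} \<union> Inr ` {i. i < n \<and> \<sigma> i = -1}"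

definition hom :: "nat \<Rightarrow> ((nat \<Rightarrow> int) \<Rightarrow> real) \<Rightarrow> (nat + nat) set \<Rightarrow> real" where
  "hom n mu T = (\<Sum>\<sigma>\<in>cube n. if S_of n \<sigma> = T then mu \<sigma> else 0)"

definition gen_sets :: "'a set \<Rightarrow> nat \<Rightarrow> ('a set \<Rightarrow> real) \<Rightarrow> ('a \<Rightarrow> real) \<Rightarrow> real" where
  "gen_sets U k \<pi> z = (\<Sum>S\<in>{S. S \<subseteq> U \<and> card S = k}. \<pi> S * (\<Prod>i\<in>S. z i))"

definition incl_prob :: "'a set \<Rightarrow> nat \<Rightarrow> ('a set \<Rightarrow> real) \<Rightarrow> 'a \<Rightarrow> real" where
  "incl_prob U k \<pi> i = (\<Sum>S\<in>{S. S \<subseteq> U \<and> card S = k}. if i \<in> S then \<pi> S else 0)"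

definition entropically_independent_on ::
  "'a set \<Rightarrow> nat \<Rightarrow> ('a set \<Rightarrow> real) \<Rightarrow> real \<Rightarrow> ('a \<Rightarrow> real) set \<Rightarrow> bool" where
  "entropically_independent_on U k \<pi> \<alpha> D' \<longleftrightarrow>
     (\<forall>z\<in>D'. (gen_sets U k \<pi> (\<lambda>i. z i powr \<alpha>)) powr (1 / (real k * \<alpha>))
              \<le> (1 / real k) * (\<Sum>i\<in>U. incl_prob U k \<pi> i * z i))"

definition pos_orthant_on :: "'a set \<Rightarrow> ('a \<Rightarrow> real) set" where
  "pos_orthant_on U = {z. \<forall>i\<in>U. z i > 0}"

definition D_hom :: "nat \<Rightarrow> (nat \<Rightarrow> real) set \<Rightarrow> (nat + nat \<Rightarrow> real) set" where
  "D_hom n D = {z. (\<forall>x\<in>ground n. z x > 0) \<and>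
                   (\<exists>w\<in>D. \<forall>i<n. w i = z (Inl i) / z (Inr i))}"

end

theory Submission
  imports Defs "HOL-Analysis.Convex"
begin

text \<open>Write \<open>i'\<close> for the copy \<open>Inr i\<close> of \<open>i\<close> and put \<open>w\<^sub>i = z\<^sub>i / z\<^sub>i\<^sub>'\<close>. Every set in the
  support of \<open>hom n mu\<close> contains exactly one of \<open>i, i'\<close>, so its generating polynomial at
  \<open>z\<^sup>\<alpha>\<close> is \<open>(\<Prod>\<^sub>i z\<^sub>i\<^sub>')\<^sup>\<alpha> g(w\<^sup>\<alpha>)\<close>, where \<open>g\<close> is the generating polynomial of \<open>mu\<close>; and the
  inclusion probabilities of \<open>i\<close> and \<open>i'\<close> are the marginals \<open>mu\<^sub>i(+1)\<close> and \<open>mu\<^sub>i(-1)\<close>.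
  Entropic independence at \<open>z\<close> therefore says
  \<open>(g(w\<^sup>\<alpha>)\<^bsup>1/\<alpha>\<^esup> \<Prod>\<^sub>i c\<^sub>i)\<^bsup>1/n\<^esup> \<le> (1/n) \<Sum>\<^sub>i c\<^sub>i a\<^sub>i\<close> with \<open>c\<^sub>i = z\<^sub>i\<^sub>'\<close> and
  \<open>a\<^sub>i = mu\<^sub>i(+1) w\<^sub>i + mu\<^sub>i(-1)\<close>, and the homogeneous points above a fixed \<open>w\<close> realise
  every \<open>c > 0\<close>. By AM-GM, which is tight at \<open>c\<^sub>i = 1/a\<^sub>i\<close>, this holds for all \<open>c > 0\<close>
  exactly when \<open>g(w\<^sup>\<alpha>)\<^bsup>1/\<alpha>\<^esup> \<le> \<Prod>\<^sub>i a\<^sub>i\<close>, i.e. when \<open>mu\<close> is product dominated at \<open>w\<close>.\<close>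

lemma le_prod_iff_geom_mean_le_arith_mean:
  fixes a :: "'i \<Rightarrow> real" and G :: real
  assumes "finite I" "I \<noteq> {}" and a_pos: "\<And>i. i \<in> I \<Longrightarrow> a i > 0" and "G \<ge> 0"
  shows "G \<le> (\<Prod>i\<in>I. a i) \<longleftrightarrow>
    (\<forall>c :: 'i \<Rightarrow> real. (\<forall>i\<in>I. c i > 0) \<longrightarrow>
       (G * (\<Prod>i\<in>I. c i)) powr (1 / card I) \<le> (\<Sum>i\<in>I. c i * a i) / card I)"
proof -
  have exp_pos: "1 / real (card I) > 0" using assms(1,2) by (simp add: card_gt_0_iff)
  have A_pos: "(\<Prod>i\<in>I. a i) > 0" using a_pos by (intro prod_pos) auto
  show ?thesis
  proof safe
    fix c :: "'i \<Rightarrow> real" assume G_le: "G \<le> (\<Prod>i\<in>I. a i)" and c_pos: "\<forall>i\<in>I. c i > 0"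
    have "G * (\<Prod>i\<in>I. c i) \<le> (\<Prod>i\<in>I. a i) * (\<Prod>i\<in>I. c i)"
      using G_le c_pos by (intro mult_right_mono prod_nonneg) (auto intro: less_imp_le)
    also have "\<dots> = (\<Prod>i\<in>I. c i * a i)" by (simp add: prod.distrib mult.commute)
    finally have "(G * (\<Prod>i\<in>I. c i)) powr (1 / card I) \<le> (\<Prod>i\<in>I. c i * a i) powr (1 / card I)"
      using exp_pos c_pos \<open>G \<ge> 0\<close>
      by (intro powr_mono2 mult_nonneg_nonneg prod_nonneg) (auto simp: less_imp_le)
    also have "\<dots> \<le> (\<Sum>i\<in>I. c i * a i / card I)"
      by (rule arith_geom_mean) (use assms c_pos in \<open>auto intro: less_imp_le\<close>)
    finally show "(G * (\<Prod>i\<in>I. c i)) powr (1 / card I) \<le> (\<Sum>i\<in>I. c i * a i) / card I"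
      by (simp add: sum_divide_distrib)
  next
    assume bound: "\<forall>c. (\<forall>i\<in>I. c i > 0) \<longrightarrow>
       (G * (\<Prod>i\<in>I. c i)) powr (1 / card I) \<le> (\<Sum>i\<in>I. c i * a i) / card I"
    have "(\<Prod>i\<in>I. 1 / a i) = 1 / (\<Prod>i\<in>I. a i)" by (simp add: prod_dividef)
    moreover have "(\<Sum>i\<in>I. 1 / a i * a i) = (\<Sum>i\<in>I. 1)"
      by (intro sum.cong refl) (auto dest!: a_pos)
    ultimately have "(G / (\<Prod>i\<in>I. a i)) powr (1 / card I) \<le> 1"
      using bound[rule_format, of "\<lambda>i. 1 / a i"] a_pos exp_pos by simp
    then have "G / (\<Prod>i\<in>I. a i) \<le> 1"
      using powr_less_mono2[OF exp_pos, of 1 "G / (\<Prod>i\<in>I. a i)"] by fastforce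
    then show "G \<le> (\<Prod>i\<in>I. a i)" using A_pos by (simp add: divide_le_eq_1)
  qed
qed

definition product_dominated_at :: "nat \<Rightarrow> ((nat \<Rightarrow> int) \<Rightarrow> real) \<Rightarrow> real \<Rightarrow> (nat \<Rightarrow> real) \<Rightarrow> bool" where
  "product_dominated_at n mu \<alpha> w \<longleftrightarrow>
     (gen_cube n mu (\<lambda>i. w i powr \<alpha>)) powr (1 / \<alpha>) \<le> (\<Prod>i<n. marg n mu i 1 * w i + marg n mu i (-1))"

definition entropically_independent_at ::
  "'a set \<Rightarrow> nat \<Rightarrow> ('a set \<Rightarrow> real) \<Rightarrow> real \<Rightarrow> ('a \<Rightarrow> real) \<Rightarrow> bool" where
  "entropically_independent_at U k \<pi> \<alpha> z \<longleftrightarrow>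
     (gen_sets U k \<pi> (\<lambda>i. z i powr \<alpha>)) powr (1 / (real k * \<alpha>))
       \<le> (1 / real k) * (\<Sum>i\<in>U. incl_prob U k \<pi> i * z i)"

lemma product_dominated_on_iff:
  "product_dominated_on n mu \<alpha> D \<longleftrightarrow> (\<forall>w\<in>D. product_dominated_at n mu \<alpha> w)"
  unfolding product_dominated_on_def product_dominated_at_def ..

lemma entropically_independent_on_iff:
  "entropically_independent_on U k \<pi> \<alpha> D' \<longleftrightarrow> (\<forall>z\<in>D'. entropically_independent_at U k \<pi> \<alpha> z)"
  unfolding entropically_independent_on_def entropically_independent_at_def ..

lemma cube_coord: "\<sigma> \<in> cube n \<Longrightarrow> i < n \<Longrightarrow> \<sigma> i = 1 \<or> \<sigma> i = -1"
  unfolding cube_def by (auto simp: PiE_def Pi_def)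

lemma marg_nonneg: "is_distr n mu \<Longrightarrow> marg n mu i s \<ge> 0"
  unfolding marg_def is_distr_def by (intro sum_nonneg) auto

lemma marg_pos_add_marg_neg:
  assumes "is_distr n mu" "i < n"
  shows "marg n mu i 1 + marg n mu i (-1) = 1"
proof -
  have "marg n mu i 1 + marg n mu i (-1) = (\<Sum>\<sigma>\<in>cube n. mu \<sigma>)"
    unfolding marg_def sum.distrib[symmetric]
    using cube_coord[OF _ assms(2)] by (intro sum.cong) auto
  then show ?thesis using assms(1) unfolding is_distr_def by simp
qed

lemma marg_affine_pos:
  assumes "is_distr n mu" "i < n" "x > 0"
  shows "marg n mu i 1 * x + marg n mu i (-1) > 0"
proof (cases "marg n mu i 1 = 0")
  case True
  then show ?thesis using marg_pos_add_marg_neg[OF assms(1,2)] by simp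
next
  case False
  then have "marg n mu i 1 > 0" using marg_nonneg[OF assms(1)] by (simp add: order_less_le)
  then show ?thesis using assms(3) marg_nonneg[OF assms(1), of i "-1"] by (simp add: add_pos_nonneg)
qed

lemma gen_cube_nonneg: "is_distr n mu \<Longrightarrow> (\<And>i. z i \<ge> 0) \<Longrightarrow> gen_cube n mu z \<ge> 0"
  unfolding gen_cube_def is_distr_def by (intro sum_nonneg mult_nonneg_nonneg prod_nonneg) auto

lemma gen_cube_cong: "(\<And>i. i < n \<Longrightarrow> f i = g i) \<Longrightarrow> gen_cube n mu f = gen_cube n mu g"
  unfolding gen_cube_def by (intro sum.cong refl arg_cong2[where f="(*)"] prod.cong) auto

definition signed_copy :: "(nat \<Rightarrow> int) \<Rightarrow> nat \<Rightarrow> nat + nat" where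
  "signed_copy \<sigma> i = (if \<sigma> i = 1 then Inl i else Inr i)"

lemma inj_signed_copy: "inj (signed_copy \<sigma>)"
  unfolding signed_copy_def inj_def by (auto split: if_splits)

lemma S_of_eq_image: "\<sigma> \<in> cube n \<Longrightarrow> S_of n \<sigma> = signed_copy \<sigma> ` {..<n}"
  unfolding S_of_def signed_copy_def using cube_coord[of \<sigma> n] by (auto; force)

lemma S_of_mem_subsets:
  assumes "\<sigma> \<in> cube n"
  shows "S_of n \<sigma> \<in> {S. S \<subseteq> ground n \<and> card S = n}"
proof -
  have "card (S_of n \<sigma>) = n"
    unfolding S_of_eq_image[OF assms] by (simp add: card_image inj_on_subset[OF inj_signed_copy])
  moreover have "S_of n \<sigma> \<subseteq> ground n"
    unfolding S_of_def ground_def by auto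
  ultimately show ?thesis by simp
qed

lemma finite_ground: "finite (ground n)"
  unfolding ground_def by simp

lemma finite_subsets_ground: "finite {S. S \<subseteq> ground n \<and> card S = k}"
  using finite_ground by (rule finite_subset[rotated, OF finite_Pow_iff[THEN iffD2]]) auto

lemma sum_ground: "(\<Sum>x\<in>ground n. f x) = (\<Sum>i<n. f (Inl i) + f (Inr i))"
proof -
  have "(\<Sum>x\<in>ground n. f x) = (\<Sum>x\<in>Inl ` {..<n}. f x) + (\<Sum>x\<in>Inr ` {..<n}. f x)"
    unfolding ground_def by (rule sum.union_disjoint) auto
  then show ?thesis by (simp add: sum.reindex sum.distrib)
qed

lemma sum_hom_eq:
  "(\<Sum>S\<in>{S. S \<subseteq> ground n \<and> card S = n}. hom n mu S * F S) = (\<Sum>\<sigma>\<in>cube n. mu \<sigma> * F (S_of n \<sigma>))"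
proof -
  have "(\<Sum>S\<in>{S. S \<subseteq> ground n \<and> card S = n}. hom n mu S * F S)
     = (\<Sum>S\<in>{S. S \<subseteq> ground n \<and> card S = n}. \<Sum>\<sigma>\<in>cube n. if S_of n \<sigma> = S then mu \<sigma> * F S else 0)"
    unfolding hom_def sum_distrib_right by (intro sum.cong refl) auto
  also have "\<dots> = (\<Sum>\<sigma>\<in>cube n. \<Sum>S\<in>{S. S \<subseteq> ground n \<and> card S = n}. if S_of n \<sigma> = S then mu \<sigma> * F S else 0)"
    by (rule sum.swap)
  also have "\<dots> = (\<Sum>\<sigma>\<in>cube n. mu \<sigma> * F (S_of n \<sigma>))"
    using S_of_mem_subsets finite_subsets_ground by (intro sum.cong refl) (simp add: sum.delta)
  finally show ?thesis .
qed

lemma Inl_mem_S_of [simp]: "Inl i \<in> S_of n \<sigma> \<longleftrightarrow> i < n \<and> \<sigma> i = 1"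
  unfolding S_of_def by auto

lemma Inr_mem_S_of [simp]: "Inr i \<in> S_of n \<sigma> \<longleftrightarrow> i < n \<and> \<sigma> i = -1"
  unfolding S_of_def by auto

lemma incl_prob_hom:
  "incl_prob (ground n) n (hom n mu) x = (\<Sum>\<sigma>\<in>cube n. if x \<in> S_of n \<sigma> then mu \<sigma> else 0)"
proof -
  have "incl_prob (ground n) n (hom n mu) x
     = (\<Sum>S\<in>{S. S \<subseteq> ground n \<and> card S = n}. hom n mu S * (if x \<in> S then 1 else 0))"
    unfolding incl_prob_def by (intro sum.cong refl) auto
  also have "\<dots> = (\<Sum>\<sigma>\<in>cube n. mu \<sigma> * (if x \<in> S_of n \<sigma> then 1 else 0))"
    by (rule sum_hom_eq)
  also have "\<dots> = (\<Sum>\<sigma>\<in>cube n. if x \<in> S_of n \<sigma> then mu \<sigma> else 0)"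
    by (intro sum.cong) auto
  finally show ?thesis .
qed

lemma sum_incl_prob_hom:
  "(\<Sum>x\<in>ground n. incl_prob (ground n) n (hom n mu) x * z x)
   = (\<Sum>i<n. marg n mu i 1 * z (Inl i) + marg n mu i (-1) * z (Inr i))"
  unfolding sum_ground incl_prob_hom marg_def by simp

lemma gen_sets_hom:
  assumes "\<And>i. i < n \<Longrightarrow> f (Inr i) \<noteq> 0"
  shows "gen_sets (ground n) n (hom n mu) f = (\<Prod>i<n. f (Inr i)) * gen_cube n mu (\<lambda>i. f (Inl i) / f (Inr i))"
proof -
  have "(\<Prod>x\<in>S_of n \<sigma>. f x) = (\<Prod>i<n. f (Inr i)) * (\<Prod>i\<in>{i. i < n \<and> \<sigma> i = 1}. f (Inl i) / f (Inr i))"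
    if "\<sigma> \<in> cube n" for \<sigma>
  proof -
    have "(\<Prod>x\<in>S_of n \<sigma>. f x) = (\<Prod>i<n. f (Inr i) * (if \<sigma> i = 1 then f (Inl i) / f (Inr i) else 1))"
      unfolding S_of_eq_image[OF that] prod.reindex[OF inj_on_subset[OF inj_signed_copy subset_UNIV]]
      using assms by (intro prod.cong) (auto simp: signed_copy_def)
    also have "\<dots> = (\<Prod>i<n. f (Inr i)) * (\<Prod>i<n. if \<sigma> i = 1 then f (Inl i) / f (Inr i) else 1)"
      by (rule prod.distrib)
    also have "(\<Prod>i<n. if \<sigma> i = 1 then f (Inl i) / f (Inr i) else 1)
        = (\<Prod>i\<in>{i. i < n \<and> \<sigma> i = 1}. f (Inl i) / f (Inr i))"
      by (subst prod.inter_filter[symmetric]) (auto intro: prod.cong)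
    finally show ?thesis .
  qed
  then show ?thesis
    unfolding gen_sets_def sum_hom_eq gen_cube_def sum_distrib_left by (auto intro: sum.cong)
qed

lemma entropically_independent_at_hom_iff:
  assumes "is_distr n mu" "n \<ge> 1" "\<alpha> > 0"
    and z_pos: "\<forall>x\<in>ground n. z x > 0" and z_w: "\<forall>i<n. w i = z (Inl i) / z (Inr i)"
  shows "entropically_independent_at (ground n) n (hom n mu) \<alpha> z \<longleftrightarrow>
    (gen_cube n mu (\<lambda>i. w i powr \<alpha>) powr (1 / \<alpha>) * (\<Prod>i<n. z (Inr i))) powr (1 / n)
      \<le> (\<Sum>i<n. z (Inr i) * (marg n mu i 1 * w i + marg n mu i (-1))) / n"
proof -
  have zl: "z (Inl i) > 0" and zr: "z (Inr i) > 0" if "i < n" for i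
    using z_pos that by (auto simp: ground_def)
  define G where "G = gen_cube n mu (\<lambda>i. w i powr \<alpha>)"
  define P where "P = (\<Prod>i<n. z (Inr i))"
  have G_nonneg: "G \<ge> 0" unfolding G_def using assms(1) by (rule gen_cube_nonneg) simp
  have P_nonneg: "P \<ge> 0" unfolding P_def using zr by (intro prod_nonneg) (simp add: less_imp_le)
  have "gen_sets (ground n) n (hom n mu) (\<lambda>x. z x powr \<alpha>)
      = (\<Prod>i<n. z (Inr i) powr \<alpha>) * gen_cube n mu (\<lambda>i. z (Inl i) powr \<alpha> / z (Inr i) powr \<alpha>)"
    by (intro gen_sets_hom) (auto dest!: zr)
  also have "\<dots> = P powr \<alpha> * G"
    unfolding P_def G_def prod_powr_distrib using z_w zl zr
    by (intro arg_cong2[where f="(*)"] gen_cube_cong refl) (simp add: powr_divide less_imp_le)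
  finally have gen: "gen_sets (ground n) n (hom n mu) (\<lambda>x. z x powr \<alpha>) = P powr \<alpha> * G" .
  have lhs: "(P powr \<alpha> * G) powr (1 / (real n * \<alpha>)) = (G powr (1 / \<alpha>) * P) powr (1 / n)"
    using G_nonneg P_nonneg assms(2,3) by (simp add: powr_mult powr_powr mult.commute)
  have "(\<Sum>x\<in>ground n. incl_prob (ground n) n (hom n mu) x * z x)
      = (\<Sum>i<n. z (Inr i) * (marg n mu i 1 * w i + marg n mu i (-1)))"
    unfolding sum_incl_prob_hom using z_w zr
    by (intro sum.cong refl) (simp add: field_simps less_imp_neq[symmetric])
  then show ?thesis
    unfolding entropically_independent_at_def gen lhs by (simp add: G_def P_def)
qed

lemma product_dominated_at_iff_hom:
  assumes d: "is_distr n mu" and n: "n \<ge> 1" and \<alpha>: "\<alpha> > 0" and w_pos: "\<forall>i<n. w i > 0"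
  shows "product_dominated_at n mu \<alpha> w \<longleftrightarrow>
    (\<forall>z. (\<forall>x\<in>ground n. z x > 0) \<longrightarrow> (\<forall>i<n. w i = z (Inl i) / z (Inr i)) \<longrightarrow>
       entropically_independent_at (ground n) n (hom n mu) \<alpha> z)"
proof -
  let ?a = "\<lambda>i. marg n mu i 1 * w i + marg n mu i (-1)"
  let ?G = "gen_cube n mu (\<lambda>i. w i powr \<alpha>) powr (1 / \<alpha>)"
  have "product_dominated_at n mu \<alpha> w \<longleftrightarrow>
      (\<forall>c :: nat \<Rightarrow> real. (\<forall>i\<in>{..<n}. c i > 0) \<longrightarrow>
         (?G * (\<Prod>i<n. c i)) powr (1 / card {..<n}) \<le> (\<Sum>i<n. c i * ?a i) / card {..<n})"
    unfolding product_dominated_at_def using n w_pos marg_affine_pos[OF d]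
    by (intro le_prod_iff_geom_mean_le_arith_mean) (auto simp: lessThan_empty_iff)
  also have "\<dots> \<longleftrightarrow> (\<forall>z. (\<forall>x\<in>ground n. z x > 0) \<longrightarrow> (\<forall>i<n. w i = z (Inl i) / z (Inr i)) \<longrightarrow>
       entropically_independent_at (ground n) n (hom n mu) \<alpha> z)"
  proof safe
    fix z :: "nat + nat \<Rightarrow> real"
    assume bound: "\<forall>c :: nat \<Rightarrow> real. (\<forall>i\<in>{..<n}. c i > 0) \<longrightarrow>
         (?G * (\<Prod>i<n. c i)) powr (1 / card {..<n}) \<le> (\<Sum>i<n. c i * ?a i) / card {..<n}"
      and z_pos: "\<forall>x\<in>ground n. z x > 0" and z_w: "\<forall>i<n. w i = z (Inl i) / z (Inr i)"
    have "\<forall>i\<in>{..<n}. z (Inr i) > 0" using z_pos by (simp add: ground_def)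
    then show "entropically_independent_at (ground n) n (hom n mu) \<alpha> z"
      using bound[rule_format, of "\<lambda>i. z (Inr i)"]
      by (simp add: entropically_independent_at_hom_iff[OF d n \<alpha> z_pos z_w])
  next
    fix c :: "nat \<Rightarrow> real"
    assume ei: "\<forall>z. (\<forall>x\<in>ground n. z x > 0) \<longrightarrow> (\<forall>i<n. w i = z (Inl i) / z (Inr i)) \<longrightarrow>
       entropically_independent_at (ground n) n (hom n mu) \<alpha> z"
      and c_pos: "\<forall>i\<in>{..<n}. c i > 0"
    define z where "z = case_sum (\<lambda>i. c i * w i) c"
    have z_pos: "\<forall>x\<in>ground n. z x > 0" unfolding z_def ground_def using c_pos w_pos by auto
    have z_w: "\<forall>i<n. w i = z (Inl i) / z (Inr i)" unfolding z_def using c_pos by force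
    have "entropically_independent_at (ground n) n (hom n mu) \<alpha> z" using ei z_pos z_w by blast
    then have "(?G * (\<Prod>i<n. z (Inr i))) powr (1 / n) \<le> (\<Sum>i<n. z (Inr i) * ?a i) / n"
      unfolding entropically_independent_at_hom_iff[OF d n \<alpha> z_pos z_w] .
    then show "(?G * (\<Prod>i<n. c i)) powr (1 / card {..<n}) \<le> (\<Sum>i<n. c i * ?a i) / card {..<n}"
      by (simp add: z_def)
  qed
  finally show ?thesis .
qed

lemma product_dominated_on_iff_entropically_independent_on_D_hom:
  assumes d: "is_distr n mu" and n: "n \<ge> 1" and \<alpha>: "\<alpha> > 0" and D: "D \<subseteq> pos_orthant n"
  shows "product_dominated_on n mu \<alpha> D \<longleftrightarrow>
    entropically_independent_on (ground n) n (hom n mu) \<alpha> (D_hom n D)"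
  unfolding product_dominated_on_iff entropically_independent_on_iff
proof safe
  fix z assume pd: "\<forall>w\<in>D. product_dominated_at n mu \<alpha> w" and "z \<in> D_hom n D"
  then obtain w where "w \<in> D" and z_pos: "\<forall>x\<in>ground n. z x > 0"
    and z_w: "\<forall>i<n. w i = z (Inl i) / z (Inr i)"
    unfolding D_hom_def by auto
  moreover have "\<forall>i<n. w i > 0" using \<open>w \<in> D\<close> D by (auto simp: pos_orthant_def)
  ultimately show "entropically_independent_at (ground n) n (hom n mu) \<alpha> z"
    using pd product_dominated_at_iff_hom[OF d n \<alpha>] by blast
next
  fix w assume ei: "\<forall>z\<in>D_hom n D. entropically_independent_at (ground n) n (hom n mu) \<alpha> z"
    and "w \<in> D"
  then have "\<forall>i<n. w i > 0" using D by (auto simp: pos_orthant_def)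
  then show "product_dominated_at n mu \<alpha> w"
    using ei \<open>w \<in> D\<close> by (subst product_dominated_at_iff_hom[OF d n \<alpha>]) (auto simp: D_hom_def)
qed

lemma D_hom_pos_orthant: "D_hom n (pos_orthant n) = pos_orthant_on (ground n)"
proof (intro set_eqI iffI)
  fix z assume "z \<in> pos_orthant_on (ground n)"
  then have "\<forall>x\<in>ground n. z x > 0" by (simp add: pos_orthant_on_def)
  moreover have "(\<lambda>i. z (Inl i) / z (Inr i)) \<in> pos_orthant n"
    using calculation unfolding pos_orthant_def ground_def by auto
  ultimately show "z \<in> D_hom n (pos_orthant n)" unfolding D_hom_def by auto
qed (auto simp: D_hom_def pos_orthant_on_def)

theorem lemma4p4:
  fixes n :: nat and mu :: "(nat \<Rightarrow> int) \<Rightarrow> real" and \<alpha> :: real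
    and D :: "(nat \<Rightarrow> real) set"
  assumes "n \<ge> 1"
    and "is_distr n mu"
    and "0 < \<alpha>" and "\<alpha> < 1"
    and "D \<subseteq> pos_orthant n"
  shows "(product_dominated_on n mu \<alpha> D \<longleftrightarrow>
           entropically_independent_on (ground n) n (hom n mu) \<alpha> (D_hom n D))
       \<and> (product_dominated_on n mu \<alpha> (pos_orthant n) \<longleftrightarrow>
           entropically_independent_on (ground n) n (hom n mu) \<alpha> (pos_orthant_on (ground n)))"
  using product_dominated_on_iff_entropically_independent_on_D_hom[OF assms(2,1,3)]
    assms(5) D_hom_pos_orthant[of n]
  by simp

end
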